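(* Let $G$ be a hued patch and let $\varphi$ be a 4-coloring (with colors in $\mathbb{Z}_2^2$) of the boundary of the outer face of $G$. If $\varphi$ extends to a 4-coloring of $G$, then $\varphi$ is viable.
   Context: A patch is a connected plane graph all of whose faces, except possibly the outer face, have length three. A hued graph is a graph $G$ with a proper coloring $\psi_G:V(G)\to\mathbb{Z}_3$ (hue); a dappled graph is a hued graph with additionally a proper coloring $\varphi_G:V(G)\to\mathbb{Z}_2^2$ (color). For a hued graph $H$ and a proper coloring $\theta:V(H)\to\mathbb{Z}_2^2$, $H^\theta$ denotes the dappled graph with color $\theta$. A homomorphism of dappled graphs maps adjacent vertices to adjacent vertices and preserves hue and color. The dappled triangular grid $\mathbf{T}$ has vertex set $\mathbb{Z}^2$, with $(i_1,j_1)$ and $(i_2,j_2)$ adjacent iff $(i_2-i_1,j_2-j_1)\in\{\pm(1,0),\pm(0,1),\pm(1,1)\}$, hue $(i+j)\bmod 3$ and color $(i\bmod 2,j\bmod 2)$ at $(i,j)$. A 4-coloring $\varphi$ of a connected hued graph $C$ is viable if $C^\varphi$ has a homomorphism to $\mathbf{T}$. The boundary of the outer face of $G$ is regarded as a hued graph with the hues inherited from $G$. *)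

theory Defs
  imports Main "HOL-Library.Numeral_Type"
begin

definition simple_graph :: "'v set \<Rightarrow> ('v \<Rightarrow> 'v \<Rightarrow> bool) \<Rightarrow> bool" where
  "simple_graph V E \<longleftrightarrow> finite V \<and> (\<forall>u v. E u v \<longrightarrow> u \<in> V \<and> v \<in> V \<and> u \<noteq> v \<and> E v u)"

definition connected_graph :: "'v set \<Rightarrow> ('v \<Rightarrow> 'v \<Rightarrow> bool) \<Rightarrow> bool" where
  "connected_graph V E \<longleftrightarrow> V \<noteq> {} \<and> (\<forall>u\<in>V. \<forall>v\<in>V. E\<^sup>*\<^sup>* u v)"

definition nbrs :: "('v \<Rightarrow> 'v \<Rightarrow> bool) \<Rightarrow> 'v \<Rightarrow> 'v set" where
  "nbrs E u = {v. E u v}"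

definition darts :: "('v \<Rightarrow> 'v \<Rightarrow> bool) \<Rightarrow> ('v \<times> 'v) set" where
  "darts E = {(u, v). E u v}"

definition rotation_system :: "'v set \<Rightarrow> ('v \<Rightarrow> 'v \<Rightarrow> bool) \<Rightarrow> ('v \<Rightarrow> 'v \<Rightarrow> 'v) \<Rightarrow> bool" where
  "rotation_system V E \<sigma> \<longleftrightarrow>
     (\<forall>u\<in>V. bij_betw (\<sigma> u) (nbrs E u) (nbrs E u) \<and>
             (\<forall>v\<in>nbrs E u. \<forall>w\<in>nbrs E u. \<exists>k. (\<sigma> u ^^ k) v = w))"

definition face_step :: "('v \<Rightarrow> 'v \<Rightarrow> 'v) \<Rightarrow> 'v \<times> 'v \<Rightarrow> 'v \<times> 'v" where
  "face_step \<sigma> d = (snd d, \<sigma> (snd d) (fst d))"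

definition face_orbit :: "('v \<Rightarrow> 'v \<Rightarrow> 'v) \<Rightarrow> 'v \<times> 'v \<Rightarrow> ('v \<times> 'v) set" where
  "face_orbit \<sigma> d = {(face_step \<sigma> ^^ k) d | k. True}"

definition faces :: "('v \<Rightarrow> 'v \<Rightarrow> bool) \<Rightarrow> ('v \<Rightarrow> 'v \<Rightarrow> 'v) \<Rightarrow> ('v \<times> 'v) set set" where
  "faces E \<sigma> = face_orbit \<sigma> ` darts E"

definition num_faces :: "('v \<Rightarrow> 'v \<Rightarrow> bool) \<Rightarrow> ('v \<Rightarrow> 'v \<Rightarrow> 'v) \<Rightarrow> nat" where
  "num_faces E \<sigma> = (if darts E = {} then 1 else card (faces E \<sigma>))"

text \<open>A connected plane graph, given combinatorially: a connected simple graph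
  with a rotation system of genus 0 (Euler's formula V - E + F = 2), together
  with a designated outer face Out (a face, i.e. an orbit of darts; Out = {} when
  there are no edges).\<close>
definition plane_graph ::
  "'v set \<Rightarrow> ('v \<Rightarrow> 'v \<Rightarrow> bool) \<Rightarrow> ('v \<Rightarrow> 'v \<Rightarrow> 'v) \<Rightarrow> ('v \<times> 'v) set \<Rightarrow> bool" where
  "plane_graph V E \<sigma> Out \<longleftrightarrow>
     simple_graph V E \<and> connected_graph V E \<and> rotation_system V E \<sigma> \<and>
     int (card V) - int (card (darts E) div 2) + int (num_faces E \<sigma>) = 2 \<and>
     (if darts E = {} then Out = {} else Out \<in> faces E \<sigma>)"

definition patch ::
  "'v set \<Rightarrow> ('v \<Rightarrow> 'v \<Rightarrow> bool) \<Rightarrow> ('v \<Rightarrow> 'v \<Rightarrow> 'v) \<Rightarrow> ('v \<times> 'v) set \<Rightarrow> bool" where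
  "patch V E \<sigma> Out \<longleftrightarrow> plane_graph V E \<sigma> Out \<and> (\<forall>f\<in>faces E \<sigma>. f \<noteq> Out \<longrightarrow> card f = 3)"

definition bd_verts :: "'v set \<Rightarrow> ('v \<Rightarrow> 'v \<Rightarrow> bool) \<Rightarrow> ('v \<times> 'v) set \<Rightarrow> 'v set" where
  "bd_verts V E Out = (if darts E = {} then V else fst ` Out)"

definition bd_adj :: "('v \<times> 'v) set \<Rightarrow> 'v \<Rightarrow> 'v \<Rightarrow> bool" where
  "bd_adj Out u v \<longleftrightarrow> (u, v) \<in> Out \<or> (v, u) \<in> Out"

definition proper_on :: "'v set \<Rightarrow> ('v \<Rightarrow> 'v \<Rightarrow> bool) \<Rightarrow> ('v \<Rightarrow> 'c) \<Rightarrow> bool" where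
  "proper_on V E c \<longleftrightarrow> (\<forall>u\<in>V. \<forall>v\<in>V. E u v \<longrightarrow> c u \<noteq> c v)"

text \<open>The dappled triangular grid T: Z_3 = type 3, Z_2^2 = type 2 \<times> 2.\<close>
definition T_adj :: "int \<times> int \<Rightarrow> int \<times> int \<Rightarrow> bool" where
  "T_adj p q \<longleftrightarrow> (fst q - fst p, snd q - snd p) \<in>
     {(1,0), (-1,0), (0,1), (0,-1), (1,1), (-1,-1)}"

definition T_hue :: "int \<times> int \<Rightarrow> 3" where
  "T_hue p = of_int (fst p + snd p)"

definition T_color :: "int \<times> int \<Rightarrow> 2 \<times> 2" where
  "T_color p = (of_int (fst p), of_int (snd p))"

definition dappled_hom_T ::
  "'v set \<Rightarrow> ('v \<Rightarrow> 'v \<Rightarrow> bool) \<Rightarrow> ('v \<Rightarrow> 3) \<Rightarrow> ('v \<Rightarrow> 2 \<times> 2) \<Rightarrow> ('v \<Rightarrow> int \<times> int) \<Rightarrow> bool" where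
  "dappled_hom_T C A hue col f \<longleftrightarrow>
     (\<forall>u\<in>C. \<forall>v\<in>C. A u v \<longrightarrow> T_adj (f u) (f v)) \<and>
     (\<forall>u\<in>C. T_hue (f u) = hue u \<and> T_color (f u) = col u)"

definition viable :: "'v set \<Rightarrow> ('v \<Rightarrow> 'v \<Rightarrow> bool) \<Rightarrow> ('v \<Rightarrow> 3) \<Rightarrow> ('v \<Rightarrow> 2 \<times> 2) \<Rightarrow> bool" where
  "viable C A hue col \<longleftrightarrow> (\<exists>f. dappled_hom_T C A hue col f)"

end

(* Along every edge uv of G the hue difference psi v - psi u and the colour difference
   theta v - theta u are nonzero, and T has exactly one unit step with a given nonzero hue and
   nonzero colour.  Assigning this step to every dart gives an antisymmetric integer cochain
   that sums to zero around every triangle, hence around every inner face of the patch.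
   On a plane graph such a cochain is a coboundary: otherwise, together with the |V| - 1
   independent vertex coboundaries and one dart cochain for every inner face (chosen along a
   spanning tree of the dual graph), it would give |V| + |F| - 1 independent cochains, while
   by Euler's formula the cochains form a space of dimension |E| = |V| + |F| - 2.
   Integrating the steps from a base vertex maps all of G to T, and this map restricts to
   the boundary. *)

theory Submission
  imports Defs "HOL-Library.Function_Algebras" "HOL-Library.Product_Plus"
    "HOL-Combinatorics.Orbits" Complex_Main
begin

section \<open>Faces of a plane graph\<close>

lemma mem_darts [simp]: "(u, v) \<in> darts E \<longleftrightarrow> E u v"
  by (simp add: darts_def)

lemma connected_graph_induct:
  assumes "connected_graph V E" "r \<in> V" "v \<in> V" "P r" "\<And>u w. E u w \<Longrightarrow> P u \<Longrightarrow> P w"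
  shows "P v"
proof -
  have "E\<^sup>*\<^sup>* r v" using assms(1-3) by (simp add: connected_graph_def)
  then show ?thesis by induction (use assms(4,5) in blast)+
qed

lemma bij_betw_orbit:
  assumes "finite A" "bij_betw f A A" "a \<in> A"
  shows "cyclic_on f (orbit f a)" "a \<in> orbit f a" "orbit f a \<subseteq> A"
proof -
  define p where "p x = (if x \<in> A then f x else x)" for x
  have "bij_betw p A A" using assms(2) bij_betw_cong[of A p f A] by (simp add: p_def)
  then have perm: "p permutes A" by (rule bij_imp_permutes) (simp add: p_def)
  have "orbit f a = orbit p a"
    by (rule orbit_cong0[OF assms(3)]) (use bij_betwE[OF assms(2)] in \<open>auto simp: p_def\<close>)
  moreover have sub: "orbit p a \<subseteq> A" using perm assms(3) by (rule permutes_orbit_subset)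
  moreover have "cyclic_on f (orbit p a) = cyclic_on p (orbit p a)"
    by (rule cyclic_cong) (use sub in \<open>auto simp: p_def\<close>)
  moreover have "cyclic_on p (orbit p a)" using perm assms(1) by (rule cyclic_on_orbit)
  moreover have "permutation p" using perm assms(1) by (auto simp: permutation_permutes)
  then have "a \<in> orbit p a" by (rule permutation_self_in_orbit)
  ultimately show "cyclic_on f (orbit f a)" "a \<in> orbit f a" "orbit f a \<subseteq> A" by simp_all
qed

lemma card3_orbit:
  assumes "a \<in> orbit f a" "card (orbit f a) = 3"
  shows "orbit f a = {a, f a, f (f a)}" "f (f (f a)) = a" "distinct [a, f a, f (f a)]"
proof -
  let ?N = "funpow_dist1 f a a"
  have orb: "orbit f a = (\<lambda>n. (f ^^ n) a) ` {0..<?N}" using assms(1) by (rule orbit_conv_funpow_dist1)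
  have "card (orbit f a) = ?N"
    unfolding orb using inj_on_funpow_dist1[OF assms(1)] by (simp add: card_image)
  then have N: "?N = 3" using assms(2) by simp
  have "{0..<3::nat} = {0, 1, 2}" by auto
  then show orb3: "orbit f a = {a, f a, f (f a)}" unfolding orb N by (simp add: numeral_2_eq_2)
  show "f (f (f a)) = a" using funpow_dist1_prop[OF assms(1)] unfolding N by (simp add: numeral_3_eq_3)
  show "distinct [a, f a, f (f a)]" using assms(2) unfolding orb3 by (intro card_distinct) simp
qed

locale plane_map =
  fixes V :: "'v set" and E :: "'v \<Rightarrow> 'v \<Rightarrow> bool" and \<sigma> :: "'v \<Rightarrow> 'v \<Rightarrow> 'v"
    and Out :: "('v \<times> 'v) set"
  assumes plane_graph: "plane_graph V E \<sigma> Out"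
begin

lemma simple: "simple_graph V E" and connected: "connected_graph V E"
  and rotation: "rotation_system V E \<sigma>"
  using plane_graph by (simp_all add: plane_graph_def)

lemma edge_sym: "E u v \<Longrightarrow> E v u" and edge_in_V: "E u v \<Longrightarrow> u \<in> V \<and> v \<in> V"
  and edge_irrefl: "E u v \<Longrightarrow> u \<noteq> v"
  using simple by (auto simp: simple_graph_def)

lemma finite_darts: "finite (darts E)"
proof -
  have "darts E \<subseteq> V \<times> V" using edge_in_V by (auto simp: darts_def)
  then show ?thesis using simple finite_subset by (auto simp: simple_graph_def)
qed

lemma rotation_nbrs:
  assumes "E u v"
  shows "bij_betw (\<sigma> u) (nbrs E u) (nbrs E u)" "E u w \<Longrightarrow> \<exists>k. (\<sigma> u ^^ k) v = w"
  using assms rotation edge_in_V by (auto simp: rotation_system_def nbrs_def)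

lemma face_step_bij: "bij_betw (face_step \<sigma>) (darts E) (darts E)"
proof -
  have "face_step \<sigma> ` darts E \<subseteq> darts E"
  proof
    fix b assume "b \<in> face_step \<sigma> ` darts E"
    then obtain a where "a \<in> darts E" "b = face_step \<sigma> a" by blast
    obtain u v where "a = (u, v)" by fastforce
    with \<open>a \<in> darts E\<close> have "E u v" by simp
    have "u \<in> nbrs E v" using edge_sym[OF \<open>E u v\<close>] by (simp add: nbrs_def)
    then show "b \<in> darts E"
      using bij_betwE[OF rotation_nbrs(1)[OF edge_sym[OF \<open>E u v\<close>]]] \<open>a = (u, v)\<close> \<open>b = _\<close>
      by (simp add: face_step_def nbrs_def)
  qed
  moreover have "inj_on (face_step \<sigma>) (darts E)"
  proof (rule inj_onI)
    fix a b assume "a \<in> darts E" "b \<in> darts E" "face_step \<sigma> a = face_step \<sigma> b"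
    moreover obtain u v u' v' where "a = (u, v)" "b = (u', v')" by fastforce
    ultimately have "E v u" "E v u'" "v' = v" "\<sigma> v u = \<sigma> v u'"
      using edge_sym by (auto simp: face_step_def)
    then show "a = b"
      using bij_betw_imp_inj_on[OF rotation_nbrs(1)[OF \<open>E v u\<close>]] \<open>a = (u, v)\<close> \<open>b = (u', v')\<close>
      by (auto simp: nbrs_def dest: inj_onD)
  qed
  ultimately show ?thesis
    unfolding bij_betw_def using endo_inj_surj[OF finite_darts] by blast
qed

lemma face_orbit:
  assumes "a \<in> darts E"
  shows "face_orbit \<sigma> a = orbit (face_step \<sigma>) a" "cyclic_on (face_step \<sigma>) (face_orbit \<sigma> a)"
    "a \<in> face_orbit \<sigma> a" "face_orbit \<sigma> a \<subseteq> darts E"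
proof -
  note orb = bij_betw_orbit[OF finite_darts face_step_bij assms]
  show eq: "face_orbit \<sigma> a = orbit (face_step \<sigma>) a"
    unfolding face_orbit_def using orbit_altdef_self_in[OF orb(2)] by simp
  show "cyclic_on (face_step \<sigma>) (face_orbit \<sigma> a)" "a \<in> face_orbit \<sigma> a" "face_orbit \<sigma> a \<subseteq> darts E"
    unfolding eq using orb by simp_all
qed

lemma face_orbit_eq: "a \<in> darts E \<Longrightarrow> b \<in> face_orbit \<sigma> a \<Longrightarrow> face_orbit \<sigma> b = face_orbit \<sigma> a"
  using face_orbit orbit_cyclic_eq3 by (metis subsetD)

lemma finite_faces: "finite (faces E \<sigma>)"
  using finite_darts by (simp add: faces_def)

lemma face_of_mem: "f \<in> faces E \<sigma> \<Longrightarrow> b \<in> f \<Longrightarrow> face_orbit \<sigma> b = f"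
  unfolding faces_def using face_orbit_eq by blast

lemma finite_face: "f \<in> faces E \<sigma> \<Longrightarrow> finite f"
  unfolding faces_def using face_orbit(4) finite_darts finite_subset by blast

lemma darts_symmetric: "(u, v) \<in> darts E \<Longrightarrow> u \<noteq> v \<and> (v, u) \<in> darts E"
  using edge_irrefl edge_sym by simp

lemma face_subset_darts: "f \<in> faces E \<sigma> \<Longrightarrow> f \<subseteq> darts E"
  unfolding faces_def using face_orbit(4) by blast

lemma face_orbit_sum_diff:
  fixes k :: "'v \<Rightarrow> 'a::ab_group_add"
  assumes "a \<in> darts E"
  shows "(\<Sum>b\<in>face_orbit \<sigma> a. k (snd b) - k (fst b)) = 0"
proof -
  let ?F = "face_orbit \<sigma> a"
  have inj: "inj_on (face_step \<sigma>) ?F"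
    using face_orbit(4)[OF assms] bij_betw_imp_inj_on[OF face_step_bij] by (rule inj_on_subset[rotated])
  have "face_step \<sigma> ` ?F = ?F"
    using face_orbit(2)[OF assms] inj cyclic_on_inI finite_cyclic_on
    by (intro endo_inj_surj) auto
  have "(\<Sum>b\<in>?F. k (snd b)) = (\<Sum>b\<in>?F. k (fst (face_step \<sigma> b)))"
    by (simp add: face_step_def)
  also have "\<dots> = (\<Sum>b\<in>face_step \<sigma> ` ?F. k (fst b))"
    using inj by (simp add: sum.reindex)
  also have "\<dots> = (\<Sum>b\<in>?F. k (fst b))" using \<open>face_step \<sigma> ` ?F = ?F\<close> by simp
  finally show ?thesis by (simp add: sum_subtractf)
qed

lemma triangular_face:
  assumes "f \<in> faces E \<sigma>" "card f = 3"
  obtains x y z where "E x y" "E y z" "E z x"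
    "\<And>g :: 'v \<times> 'v \<Rightarrow> 'a::comm_monoid_add. (\<Sum>b\<in>f. g b) = g (x, y) + g (y, z) + g (z, x)"
proof -
  obtain a where a: "a \<in> darts E" "f = face_orbit \<sigma> a" using assms(1) by (auto simp: faces_def)
  obtain x y where xy: "a = (x, y)" by fastforce
  define z where "z = \<sigma> y x"
  let ?p = "face_step \<sigma>"
  note orb = face_orbit[OF a(1)]
  have "a \<in> orbit ?p a" "card (orbit ?p a) = 3" using orb(1,3) assms(2) a(2) by argo+
  note tri = card3_orbit[OF this]
  have "\<sigma> z y = x" using tri(2) by (simp add: xy z_def face_step_def)
  then have f: "f = {(x, y), (y, z), (z, x)}" "distinct [(x, y), (y, z), (z, x)]"
    using tri(1,3) a(2) orb(1) by (simp_all add: xy z_def face_step_def)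
  moreover have "E x y" "E y z" "E z x" using f(1) orb(4) a(2) by auto
  ultimately show ?thesis by (intro that) (simp_all add: add.assoc)
qed

(* Connectivity of the dual graph. *)
lemma faces_connected:
  assumes "darts E \<noteq> {}" "Out \<in> R"
    and closed: "\<And>a. a \<in> darts E \<Longrightarrow> face_orbit \<sigma> (prod.swap a) \<in> R \<Longrightarrow> face_orbit \<sigma> a \<in> R"
  shows "faces E \<sigma> \<subseteq> R"
proof -
  have rotate: "face_orbit \<sigma> (u, \<sigma> u x) \<in> R" if "E u x" "face_orbit \<sigma> (u, x) \<in> R" for u x
  proof -
    have "face_orbit \<sigma> (x, u) \<in> R" using closed[of "(x, u)"] that edge_sym by simp
    moreover have "(u, \<sigma> u x) \<in> face_orbit \<sigma> (x, u)"
      using cyclic_on_inI[OF face_orbit(2,3)] edge_sym[OF that(1)] by (force simp: face_step_def)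
    then have "face_orbit \<sigma> (u, \<sigma> u x) = face_orbit \<sigma> (x, u)"
      using face_orbit_eq edge_sym[OF that(1)] by simp
    ultimately show ?thesis by simp
  qed
  have around: "face_orbit \<sigma> (u, w) \<in> R" if "E u x" "face_orbit \<sigma> (u, x) \<in> R" "E u w" for u x w
  proof -
    have "E u ((\<sigma> u ^^ k) x) \<and> face_orbit \<sigma> (u, (\<sigma> u ^^ k) x) \<in> R" for k
    proof (induction k)
      case (Suc k)
      then show ?case using rotate bij_betwE[OF rotation_nbrs(1)[OF that(1)]] by (auto simp: nbrs_def)
    qed (use that in simp)
    then show ?thesis using rotation_nbrs(2)[OF that(1,3)] by blast
  qed
  obtain a0 where a0: "a0 \<in> darts E" "face_orbit \<sigma> a0 = Out"
    using plane_graph assms(1) by (auto simp: plane_graph_def faces_def)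
  have "\<forall>w. E v w \<longrightarrow> face_orbit \<sigma> (v, w) \<in> R" if "v \<in> V" for v
  proof (rule connected_graph_induct[OF connected _ that])
    show "fst a0 \<in> V" using a0(1) edge_in_V by (cases a0) simp
    show "\<forall>w. E (fst a0) w \<longrightarrow> face_orbit \<sigma> (fst a0, w) \<in> R"
      using around[of "fst a0" "snd a0"] a0 assms(2) by (cases a0) simp
  next
    fix u w assume "E u w" "\<forall>x. E u x \<longrightarrow> face_orbit \<sigma> (u, x) \<in> R"
    then show "\<forall>x. E w x \<longrightarrow> face_orbit \<sigma> (w, x) \<in> R"
      using around[of w u] closed[of "(w, u)"] edge_sym by simp
  qed
  then show ?thesis using edge_in_V by (auto simp: faces_def darts_def)
qed

corollary dart_leaving_faces:
  assumes "darts E \<noteq> {}" "Out \<in> R" "R \<subseteq> faces E \<sigma>" "R \<noteq> faces E \<sigma>"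
  obtains a where "a \<in> darts E" "face_orbit \<sigma> a \<notin> R" "face_orbit \<sigma> (prod.swap a) \<in> R"
proof (rule ccontr)
  assume "\<not> thesis"
  then have "faces E \<sigma> \<subseteq> R" using that by (intro faces_connected[OF assms(1,2)]) blast
  then show False using assms(3,4) by blast
qed

lemma euler: "darts E \<noteq> {} \<Longrightarrow> card V + card (faces E \<sigma>) = card (darts E) div 2 + 2"
  using plane_graph by (simp add: plane_graph_def num_faces_def)

lemma boundary_subgraph: "bd_verts V E Out \<subseteq> V" "bd_adj Out u v \<Longrightarrow> E u v"
proof -
  have "Out \<subseteq> darts E"
    using plane_graph face_subset_darts by (auto simp: plane_graph_def split: if_splits)
  then show "bd_verts V E Out \<subseteq> V" "bd_adj Out u v \<Longrightarrow> E u v"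
    using edge_in_V edge_sym by (auto simp: bd_verts_def bd_adj_def)
qed

end

section \<open>Real cochains\<close>

(* The library has no real vector space instance for function types, so the locale is
   interpreted directly. *)
definition real_fun_scale :: "real \<Rightarrow> ('a \<Rightarrow> real) \<Rightarrow> 'a \<Rightarrow> real" where
  "real_fun_scale c g = (\<lambda>x. c * g x)"

global_interpretation real_fun: vector_space real_fun_scale
  by unfold_locales (auto simp: real_fun_scale_def fun_eq_iff algebra_simps)

lemma sum_fun_apply: "(\<Sum>a\<in>A. F a) x = (\<Sum>a\<in>A. F a x)"
  by (induct A rule: infinite_finite_induct) auto

lemma real_fun_sum_apply: "(\<Sum>i\<in>I. real_fun_scale (c i) (F i)) x = (\<Sum>i\<in>I. c i * F i x)"
  by (simp add: sum_fun_apply real_fun_scale_def)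

lemma (in vector_space) independent_image_if_scalars_zero:
  assumes fin: "finite I"
    and zero: "\<And>c. (\<Sum>i\<in>I. c i *s x i) = 0 \<Longrightarrow> \<forall>i\<in>I. c i = 0"
  shows "independent (x ` I)" "card (x ` I) = card I"
proof -
  have inj: "inj_on x I"
  proof (rule inj_onI, rule ccontr)
    fix i j assume ij: "i \<in> I" "j \<in> I" "x i = x j" "i \<noteq> j"
    define c where "c k = (if k = i then (1::'a) else if k = j then -1 else 0)" for k
    have "(\<Sum>k\<in>I. c k *s x k) = (\<Sum>k\<in>I. (if k = i then x i else 0) - (if k = j then x j else 0))"
      using ij(4) by (intro sum.cong) (auto simp: c_def)
    also have "\<dots> = 0" using fin ij by (simp add: sum_subtractf)
    finally have "\<forall>k\<in>I. c k = 0" by (rule zero)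
    then show False using ij by (auto simp: c_def)
  qed
  then show "card (x ` I) = card I" by (rule card_image)
  show "independent (x ` I)"
  proof (rule independent_if_scalars_zero)
    show "finite (x ` I)" using fin by simp
    fix u v assume u: "(\<Sum>v\<in>x ` I. u v *s v) = 0" and v: "v \<in> x ` I"
    have "(\<Sum>i\<in>I. u (x i) *s x i) = 0" using u inj by (simp add: sum.reindex)
    then show "u v = 0" using zero[of "\<lambda>i. u (x i)"] v by blast
  qed
qed

definition cochains :: "('v \<times> 'v) set \<Rightarrow> ('v \<times> 'v \<Rightarrow> real) set" where
  "cochains D = {g. (\<forall>a. a \<notin> D \<longrightarrow> g a = 0) \<and> (\<forall>a\<in>D. g (prod.swap a) = - g a)}"

definition coboundary :: "('v \<times> 'v) set \<Rightarrow> ('v \<Rightarrow> real) \<Rightarrow> 'v \<times> 'v \<Rightarrow> real" where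
  "coboundary D k a = (if a \<in> D then k (snd a) - k (fst a) else 0)"

definition dart_cochain :: "'v \<times> 'v \<Rightarrow> 'v \<times> 'v \<Rightarrow> real" where
  "dart_cochain b a = (if a = b then 1 else 0) - (if a = prod.swap b then 1 else 0)"

lemma coboundary_in_cochains:
  "(\<And>u v. (u, v) \<in> D \<Longrightarrow> (v, u) \<in> D) \<Longrightarrow> coboundary D k \<in> cochains D"
  by (auto simp: cochains_def coboundary_def)

lemma dart_cochain_in_cochains:
  assumes "b \<in> D" "\<And>u v. (u, v) \<in> D \<Longrightarrow> (v, u) \<in> D"
  shows "dart_cochain b \<in> cochains D"
proof -
  have "prod.swap b \<in> D" using assms by (cases b) simp
  have "prod.swap a = b \<longleftrightarrow> a = prod.swap b" "prod.swap a = prod.swap b \<longleftrightarrow> a = b" for a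
    by (metis swap_swap)+
  then show ?thesis
    using assms(1) \<open>prod.swap b \<in> D\<close> by (auto simp: cochains_def dart_cochain_def)
qed

lemma subspace_coboundaries: "real_fun.subspace (range (coboundary D))"
proof (rule real_fun.subspaceI)
  show "0 \<in> range (coboundary D)"
    by (rule range_eqI[where x = "\<lambda>_. 0"]) (simp add: coboundary_def fun_eq_iff)
  fix c :: real and g h assume "g \<in> range (coboundary D)" "h \<in> range (coboundary D)"
  then obtain k l where "g = coboundary D k" "h = coboundary D l" by blast
  have "g + h = coboundary D (\<lambda>v. k v + l v)"
    using \<open>g = _\<close> \<open>h = _\<close> by (simp add: coboundary_def fun_eq_iff)
  moreover have "real_fun_scale c g = coboundary D (\<lambda>v. c * k v)"
    using \<open>g = _\<close> by (simp add: coboundary_def real_fun_scale_def fun_eq_iff right_diff_distrib)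
  ultimately show "g + h \<in> range (coboundary D)" "real_fun_scale c g \<in> range (coboundary D)"
    by simp_all
qed

lemma subspace_sum_zero: "real_fun.subspace {y. (\<Sum>b\<in>A. y b) = 0}"
  by (rule real_fun.subspaceI)
    (simp_all add: sum.distrib real_fun_scale_def flip: sum_distrib_left)

lemma dart_orientation:
  fixes D :: "('v \<times> 'v) set"
  assumes "finite D" "\<And>u v. (u, v) \<in> D \<Longrightarrow> u \<noteq> v \<and> (v, u) \<in> D"
  obtains D' where "D' \<subseteq> D" "D - D' = prod.swap ` D'" "prod.swap ` D' \<inter> D' = {}"
proof -
  obtain \<iota> :: "'v \<Rightarrow> nat" where \<iota>: "inj_on \<iota> (fst ` D)"
    using finite_imp_inj_to_nat_seg[of "fst ` D"] assms(1) by blast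
  define D' where "D' = {a \<in> D. \<iota> (fst a) < \<iota> (snd a)}"
  have "\<iota> u \<noteq> \<iota> v" if "(u, v) \<in> D" for u v
  proof -
    have "u \<in> fst ` D" "v \<in> fst ` D" "u \<noteq> v"
      using that assms(2)[OF that] image_eqI[of u fst "(u, v)"] image_eqI[of v fst "(v, u)"] by auto
    then show ?thesis using inj_onD[OF \<iota>] by blast
  qed
  moreover have "(u, v) \<in> D - D' \<longleftrightarrow> (v, u) \<in> D'" for u v
  proof (cases "(u, v) \<in> D")
    case True
    then have "(v, u) \<in> D" "\<iota> u \<noteq> \<iota> v" using assms(2) calculation by auto
    then show ?thesis using True by (auto simp: D'_def)
  next
    case False
    then have "(v, u) \<notin> D" using assms(2)[of v u] by blast
    then show ?thesis using False by (simp add: D'_def)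
  qed
  then have "D - D' = prod.swap ` D'" by (auto simp: set_eq_iff)
  moreover have "prod.swap ` D' \<inter> D' = {}" by (auto simp: D'_def)
  ultimately show ?thesis by (intro that) (auto simp: D'_def)
qed

lemma cochain_expansion:
  fixes D :: "('v \<times> 'v) set"
  assumes "finite D'" "D' \<subseteq> D" "D - D' = prod.swap ` D'" "prod.swap ` D' \<inter> D' = {}"
    and "s \<in> cochains D"
  shows "s = (\<Sum>b\<in>D'. real_fun_scale (s b) (dart_cochain b))"
proof
  fix a :: "'v \<times> 'v"
  have "dart_cochain b a = (if b = a then 1 else 0) - (if b = prod.swap a then 1 else 0)" for b
    by (cases "b = a"; cases "b = prod.swap a") (auto simp: dart_cochain_def)
  have "(\<Sum>b\<in>D'. real_fun_scale (s b) (dart_cochain b)) a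
      = (\<Sum>b\<in>D'. (if b = a then s a else 0) - (if b = prod.swap a then s (prod.swap a) else 0))"
    unfolding real_fun_sum_apply by (intro sum.cong) (simp_all add: \<open>\<And>b. dart_cochain b a = _\<close>)
  also have "\<dots> = (if a \<in> D' then s a else 0) - (if prod.swap a \<in> D' then s (prod.swap a) else 0)"
    using assms(1) by (simp add: sum_subtractf)
  also have "\<dots> = s a"
  proof (cases "a \<in> D")
    case True
    then have anti: "s (prod.swap a) = - s a" using assms(5) by (simp add: cochains_def)
    show ?thesis
    proof (cases "a \<in> D'")
      case True
      then have "prod.swap a \<notin> D'" using assms(4) by (metis IntI empty_iff image_eqI swap_swap)
      then show ?thesis using True by simp
    next
      case False
      then have "prod.swap a \<in> D'" using assms(3) \<open>a \<in> D\<close> by (metis DiffI imageE swap_swap)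
      then show ?thesis using False anti by simp
    qed
  next
    case False
    then have "prod.swap a \<notin> D'" "a \<notin> D'" using assms(2,3) by (metis Diff_iff imageI subsetD swap_swap)+
    then show ?thesis using False assms(5) by (cases a) (simp add: cochains_def)
  qed
  finally show "s a = (\<Sum>b\<in>D'. real_fun_scale (s b) (dart_cochain b)) a" by simp
qed

lemma card_independent_cochains:
  fixes D :: "('v \<times> 'v) set"
  assumes "finite D" "\<And>u v. (u, v) \<in> D \<Longrightarrow> u \<noteq> v \<and> (v, u) \<in> D"
    and "real_fun.independent S" "S \<subseteq> cochains D"
  shows "card S \<le> card D div 2"
proof -
  obtain D' where D': "D' \<subseteq> D" "D - D' = prod.swap ` D'" "prod.swap ` D' \<inter> D' = {}"
    using dart_orientation assms(1,2) by blast
  have fin: "finite D'" using D'(1) assms(1) finite_subset by blast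
  have "card D = card D' + card (D - D')"
    using card_Diff_subset[OF fin D'(1)] card_mono[OF assms(1) D'(1)] by simp
  also have "card (D - D') = card D'" unfolding D'(2) by (simp add: card_image)
  finally have card: "card D div 2 = card D'" by simp
  have "S \<subseteq> real_fun.span (dart_cochain ` D')"
  proof
    fix s assume "s \<in> S"
    then have "s = (\<Sum>b\<in>D'. real_fun_scale (s b) (dart_cochain b))"
      using cochain_expansion[OF fin D'] assms(4) by blast
    also have "\<dots> \<in> real_fun.span (dart_cochain ` D')"
      by (intro real_fun.span_sum real_fun.span_scale real_fun.span_base) simp
    finally show "s \<in> real_fun.span (dart_cochain ` D')" .
  qed
  then have "card S \<le> card (dart_cochain ` D')"
    using real_fun.independent_span_bound assms(3) fin by blast
  also have "\<dots> \<le> card D'" using fin by (rule card_image_le)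
  finally show ?thesis using card by simp
qed

lemma independent_vertex_coboundaries:
  assumes "connected_graph V E" "finite V" "r \<in> V"
  defines "\<delta> \<equiv> \<lambda>v. coboundary (darts E) (\<lambda>w. if w = v then 1 else 0)"
  shows "real_fun.independent (\<delta> ` (V - {r}))" "card (\<delta> ` (V - {r})) = card V - 1"
proof -
  have fin: "finite (V - {r})" using assms(2) by simp
  have "\<forall>i\<in>V - {r}. c i = 0" if c: "(\<Sum>i\<in>V - {r}. real_fun_scale (c i) (\<delta> i)) = 0" for c
  proof -
    define c' where "c' w = (if w \<in> V - {r} then c w else 0)" for w
    have "(\<Sum>i\<in>V - {r}. real_fun_scale (c i) (\<delta> i)) = coboundary (darts E) c'"
    proof
      fix a
      have "(\<Sum>i\<in>V - {r}. c i * (if w = i then 1 else 0)) = c' w" for w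
        by (simp add: c'_def if_distrib[of "\<lambda>x. _ * x"] sum.delta' assms(2) cong: if_cong)
      then show "(\<Sum>i\<in>V - {r}. real_fun_scale (c i) (\<delta> i)) a = coboundary (darts E) c' a"
        by (simp add: real_fun_sum_apply \<delta>_def coboundary_def right_diff_distrib sum_subtractf)
    qed
    then have zero: "coboundary (darts E) c' (u, w) = 0" for u w using c by simp
    have "c' w = c' u" if "E u w" for u w
      using zero[of u w] that by (simp add: coboundary_def)
    then have "c' v = c' r" if "v \<in> V" for v
      using connected_graph_induct[OF assms(1,3) that, of "\<lambda>v. c' v = c' r"] by simp
    then show "\<forall>i\<in>V - {r}. c i = 0" by (metis DiffD1 DiffD2 c'_def singletonI)
  qed
  note indep = real_fun.independent_image_if_scalars_zero[OF fin this]
  show "real_fun.independent (\<delta> ` (V - {r}))" by (rule indep(1))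
  show "card (\<delta> ` (V - {r})) = card V - 1" using indep(2) assms(2,3) by simp
qed

section \<open>Potentials of cocycles\<close>

lemma int_potential_of_real_potential:
  fixes g :: "'v \<times> 'v \<Rightarrow> int" and h :: "'v \<Rightarrow> real"
  assumes "connected_graph V E" "\<And>u v. E u v \<Longrightarrow> u \<in> V \<and> v \<in> V"
    and h: "\<And>u v. E u v \<Longrightarrow> of_int (g (u, v)) = h v - h u"
  shows "\<exists>k. \<forall>u v. E u v \<longrightarrow> g (u, v) = k v - k u"
proof -
  obtain r where r: "r \<in> V" using assms(1) by (auto simp: connected_graph_def)
  have "h v - h r \<in> \<int>" if "v \<in> V" for v
  proof (rule connected_graph_induct[OF assms(1) r that])
    fix u w assume "E u w" "h u - h r \<in> \<int>"
    moreover have "h w - h r = (h u - h r) + of_int (g (u, w))" using h[OF \<open>E u w\<close>] by simp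
    ultimately show "h w - h r \<in> \<int>" by (metis Ints_add Ints_of_int)
  qed simp
  then have k: "of_int \<lfloor>h v - h r\<rfloor> = h v - h r" if "v \<in> V" for v
    using that by (metis Ints_cases floor_of_int)
  have "g (u, v) = \<lfloor>h v - h r\<rfloor> - \<lfloor>h u - h r\<rfloor>" if "E u v" for u v
  proof -
    have "of_int (g (u, v)) = (of_int \<lfloor>h v - h r\<rfloor> - of_int \<lfloor>h u - h r\<rfloor> :: real)"
      using h[OF that] k[of u] k[of v] assms(2)[OF that] by linarith
    then show ?thesis by (simp flip: of_int_diff)
  qed
  then show ?thesis by (intro exI[of _ "\<lambda>v. \<lfloor>h v - h r\<rfloor>"]) simp
qed

context plane_map
begin

lemma face_sum_dart_cochain:
  assumes "f \<in> faces E \<sigma>"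
  shows "(\<Sum>b\<in>f. dart_cochain a b) = (if a \<in> f then 1 else 0) - (if prod.swap a \<in> f then 1 else 0)"
  using finite_face[OF assms] by (simp add: dart_cochain_def sum_subtractf)

lemma independent_extend_across_face:
  assumes "Out \<in> R" "R \<subseteq> faces E \<sigma>" "R \<noteq> faces E \<sigma>" "darts E \<noteq> {}"
    and S: "real_fun.independent S" "S \<subseteq> cochains (darts E)"
      "\<forall>s\<in>S. \<forall>f\<in>faces E \<sigma> - R. (\<Sum>b\<in>f. s b) = 0"
  obtains x f where "f \<in> faces E \<sigma> - R" "x \<notin> S" "real_fun.independent (insert x S)"
    "x \<in> cochains (darts E)" "\<forall>s\<in>insert x S. \<forall>f'\<in>faces E \<sigma> - insert f R. (\<Sum>b\<in>f'. s b) = 0"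
proof -
  obtain a where a: "a \<in> darts E" "face_orbit \<sigma> a \<notin> R" "face_orbit \<sigma> (prod.swap a) \<in> R"
    using dart_leaving_faces assms(1-4) by blast
  define f where "f = face_orbit \<sigma> a"
  have f: "f \<in> faces E \<sigma> - R" using a by (simp add: f_def faces_def)
  have "a \<in> f" using face_orbit(3)[OF a(1)] by (simp add: f_def)
  moreover have "prod.swap a \<notin> f"
  proof
    assume "prod.swap a \<in> f"
    then have "face_orbit \<sigma> (prod.swap a) = f" by (rule face_of_mem[OF f[THEN DiffD1]])
    then show False using a(3) f by simp
  qed
  ultimately have "(\<Sum>b\<in>f. dart_cochain a b) \<noteq> 0"
    using face_sum_dart_cochain[of f a] f by simp
  have "S \<subseteq> {y. (\<Sum>b\<in>f. y b) = 0}" using S(3) f by blast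
  then have "real_fun.span S \<subseteq> {y. (\<Sum>b\<in>f. y b) = 0}"
    using subspace_sum_zero by (rule real_fun.span_minimal)
  with \<open>(\<Sum>b\<in>f. dart_cochain a b) \<noteq> 0\<close> have notin: "dart_cochain a \<notin> real_fun.span S" by blast
  have "(\<Sum>b\<in>f'. dart_cochain a b) = 0" if f': "f' \<in> faces E \<sigma> - insert f R" for f'
  proof -
    have "a \<notin> f'" "prod.swap a \<notin> f'"
      using face_of_mem[of f' a] face_of_mem[of f' "prod.swap a"] f' a(3) by (auto simp: f_def)
    then show ?thesis using face_sum_dart_cochain f' by simp
  qed
  then have vanish: "\<forall>s\<in>insert (dart_cochain a) S. \<forall>f'\<in>faces E \<sigma> - insert f R. (\<Sum>b\<in>f'. s b) = 0"
    using S(3) by blast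
  have cochain: "dart_cochain a \<in> cochains (darts E)"
    using dart_cochain_in_cochains[OF a(1)] edge_sym by simp
  have new: "dart_cochain a \<notin> S" using notin real_fun.span_base by blast
  have indep: "real_fun.independent (insert (dart_cochain a) S)"
    using notin S(1) by (rule real_fun.independent_insertI)
  show ?thesis using f new indep cochain vanish by (rule that)
qed

lemma independent_extend_across_faces:
  assumes "darts E \<noteq> {}" "Out \<in> R" "R \<subseteq> faces E \<sigma>"
    and "real_fun.independent S" "finite S" "S \<subseteq> cochains (darts E)"
      "\<forall>s\<in>S. \<forall>f\<in>faces E \<sigma> - R. (\<Sum>b\<in>f. s b) = 0"
  shows "\<exists>S'. real_fun.independent S' \<and> S' \<subseteq> cochains (darts E) \<and>
           card S' = card S + card (faces E \<sigma> - R)"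
  using assms(2-)
proof (induction "card (faces E \<sigma> - R)" arbitrary: R S)
  case 0
  then show ?case using finite_faces by auto
next
  case (Suc n)
  then have "R \<noteq> faces E \<sigma>" by auto
  with Suc.prems assms(1) obtain x f where xf: "f \<in> faces E \<sigma> - R" "x \<notin> S"
    "real_fun.independent (insert x S)" "x \<in> cochains (darts E)"
    "\<forall>s\<in>insert x S. \<forall>f'\<in>faces E \<sigma> - insert f R. (\<Sum>b\<in>f'. s b) = 0"
    by (elim independent_extend_across_face)
  have "card (faces E \<sigma> - insert f R) = n"
    using Suc.hyps(2) xf(1) finite_faces by (simp add: card_Diff_insert)
  moreover have "card (insert x S) = Suc (card S)" using Suc.prems(4) xf(2) by simp
  ultimately obtain S' where "real_fun.independent S'" "S' \<subseteq> cochains (darts E)"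
    "card S' = Suc (card S) + n"
    using Suc.hyps(1)[of "insert f R" "insert x S"] Suc.prems xf by auto
  then show ?case using Suc.hyps(2) by (intro exI[of _ S']) simp
qed

lemma face_sum_coboundary:
  assumes "f \<in> faces E \<sigma>"
  shows "(\<Sum>b\<in>f. coboundary (darts E) k b) = 0"
proof -
  obtain a where a: "a \<in> darts E" "f = face_orbit \<sigma> a" using assms by (auto simp: faces_def)
  have "(\<Sum>b\<in>f. coboundary (darts E) k b) = (\<Sum>b\<in>f. k (snd b) - k (fst b))"
    using face_subset_darts[OF assms] by (intro sum.cong) (auto simp: coboundary_def)
  then show ?thesis using face_orbit_sum_diff[OF a(1)] a(2) by simp
qed

lemma card_independent_inner_cocycles:
  assumes "darts E \<noteq> {}" "real_fun.independent S" "finite S" "S \<subseteq> cochains (darts E)"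
    and "\<forall>s\<in>S. \<forall>f\<in>faces E \<sigma> - {Out}. (\<Sum>b\<in>f. s b) = 0"
  shows "card S < card V"
proof -
  have Out: "Out \<in> faces E \<sigma>" using plane_graph assms(1) by (simp add: plane_graph_def)
  obtain S' where S': "real_fun.independent S'" "S' \<subseteq> cochains (darts E)"
    "card S' = card S + card (faces E \<sigma> - {Out})"
    using independent_extend_across_faces[OF assms(1) _ _ assms(2-5)] Out by blast
  have "card S' \<le> card (darts E) div 2"
    using card_independent_cochains[OF finite_darts _ S'(1,2)] darts_symmetric by blast
  moreover have "card (faces E \<sigma> - {Out}) = card (faces E \<sigma>) - 1"
    using Out finite_faces by simp
  moreover have "card (faces E \<sigma>) > 0" using Out finite_faces card_gt_0_iff by blast
  ultimately show ?thesis using S'(3) euler[OF assms(1)] by linarith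
qed

lemma inner_cocycle_in_coboundaries:
  assumes g: "g \<in> cochains (darts E)" "\<forall>f\<in>faces E \<sigma> - {Out}. (\<Sum>b\<in>f. g b) = 0"
  shows "g \<in> range (coboundary (darts E))"
proof (rule ccontr)
  assume g_new: "g \<notin> range (coboundary (darts E))"
  have darts: "darts E \<noteq> {}"
  proof
    assume "darts E = {}"
    then have "g = coboundary (darts E) (\<lambda>_. 0)"
      using g(1) by (simp add: cochains_def coboundary_def fun_eq_iff)
    with g_new show False by blast
  qed
  obtain r where r: "r \<in> V" using connected by (auto simp: connected_graph_def)
  have fin_V: "finite V" using simple by (simp add: simple_graph_def)
  define \<delta> where "\<delta> v = coboundary (darts E) (\<lambda>w. if w = v then 1 else 0)" for v
  define S where "S = insert g (\<delta> ` (V - {r}))"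
  note B = independent_vertex_coboundaries[OF connected fin_V r, folded \<delta>_def]
  have "\<delta> ` (V - {r}) \<subseteq> range (coboundary (darts E))" unfolding \<delta>_def by blast
  then have "real_fun.span (\<delta> ` (V - {r})) \<subseteq> range (coboundary (darts E))"
    using subspace_coboundaries by (rule real_fun.span_minimal)
  then have g_span: "g \<notin> real_fun.span (\<delta> ` (V - {r}))" using g_new by blast
  have "g \<notin> \<delta> ` (V - {r})"
  proof
    assume "g \<in> \<delta> ` (V - {r})"
    then have "g \<in> real_fun.span (\<delta> ` (V - {r}))" by (rule real_fun.span_base)
    with g_span show False by contradiction
  qed
  then have "card S = Suc (card V - 1)"
    unfolding S_def using B(2) fin_V by (subst card_insert_disjoint) simp_all
  moreover have "card V > 0" using r fin_V card_gt_0_iff by blast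
  moreover have "card S < card V"
  proof (rule card_independent_inner_cocycles[OF darts])
    show "real_fun.independent S"
      unfolding S_def using g_span B(1) by (rule real_fun.independent_insertI)
    show "finite S" using fin_V by (simp add: S_def)
    have "\<delta> v \<in> cochains (darts E)" for v
      unfolding \<delta>_def using edge_sym by (intro coboundary_in_cochains) simp
    then show "S \<subseteq> cochains (darts E)" using g(1) by (auto simp: S_def)
    show "\<forall>s\<in>S. \<forall>f\<in>faces E \<sigma> - {Out}. (\<Sum>b\<in>f. s b) = 0"
    proof (intro ballI)
      fix s f assume "s \<in> S" "f \<in> faces E \<sigma> - {Out}"
      then show "(\<Sum>b\<in>f. s b) = 0"
        using g(2) face_sum_coboundary by (auto simp: S_def \<delta>_def)
    qed
  qed
  ultimately show False by linarith
qed

theorem real_potential_exists: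
  fixes g :: "'v \<times> 'v \<Rightarrow> real"
  assumes anti: "\<And>u v. E u v \<Longrightarrow> g (v, u) = - g (u, v)"
    and inner: "\<And>f. f \<in> faces E \<sigma> \<Longrightarrow> f \<noteq> Out \<Longrightarrow> (\<Sum>b\<in>f. g b) = 0"
  shows "\<exists>h. \<forall>u v. E u v \<longrightarrow> g (u, v) = h v - h u"
proof -
  define g0 where "g0 a = (if a \<in> darts E then g a else 0)" for a
  have "g0 (prod.swap a) = - g0 a" if "a \<in> darts E" for a
    using that anti[of "fst a" "snd a"] edge_sym by (cases a) (simp add: g0_def)
  then have "g0 \<in> cochains (darts E)" by (simp add: cochains_def g0_def)
  moreover have "(\<Sum>b\<in>f. g0 b) = 0" if "f \<in> faces E \<sigma> - {Out}" for f
  proof -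
    have "(\<Sum>b\<in>f. g0 b) = (\<Sum>b\<in>f. g b)"
      using face_subset_darts that by (intro sum.cong) (auto simp: g0_def)
    then show ?thesis using inner that by simp
  qed
  ultimately obtain h where h: "g0 = coboundary (darts E) h"
    using inner_cocycle_in_coboundaries by blast
  have "g (u, v) = h v - h u" if "E u v" for u v
    using fun_cong[OF h, of "(u, v)"] that by (simp add: g0_def coboundary_def)
  then show ?thesis by blast
qed

theorem int_potential_exists:
  fixes g :: "'v \<times> 'v \<Rightarrow> int"
  assumes anti: "\<And>u v. E u v \<Longrightarrow> g (v, u) = - g (u, v)"
    and inner: "\<And>f. f \<in> faces E \<sigma> \<Longrightarrow> f \<noteq> Out \<Longrightarrow> (\<Sum>b\<in>f. g b) = 0"
  shows "\<exists>k. \<forall>u v. E u v \<longrightarrow> g (u, v) = k v - k u"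
proof -
  have "\<exists>h. \<forall>u v. E u v \<longrightarrow> of_int (g (u, v)) = (h v - h u :: real)"
    using anti inner by (intro real_potential_exists[of "\<lambda>a. of_int (g a)"]) (simp_all flip: of_int_sum)
  then show ?thesis using int_potential_of_real_potential[OF connected] edge_in_V by metis
qed

corollary int_pair_potential_exists:
  fixes g :: "'v \<times> 'v \<Rightarrow> int \<times> int"
  assumes anti: "\<And>u v. E u v \<Longrightarrow> g (v, u) = - g (u, v)"
    and inner: "\<And>f. f \<in> faces E \<sigma> \<Longrightarrow> f \<noteq> Out \<Longrightarrow> (\<Sum>b\<in>f. g b) = 0"
  shows "\<exists>k. \<forall>u v. E u v \<longrightarrow> g (u, v) = k v - k u"
proof -
  obtain k1 where k1: "\<forall>u v. E u v \<longrightarrow> fst (g (u, v)) = k1 v - k1 u"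
  proof (atomize_elim, rule int_potential_exists)
    show "fst (g (v, u)) = - fst (g (u, v))" if "E u v" for u v using anti[OF that] by simp
    show "(\<Sum>b\<in>f. fst (g b)) = 0" if "f \<in> faces E \<sigma>" "f \<noteq> Out" for f
      using inner[OF that] by (simp flip: fst_sum)
  qed
  obtain k2 where k2: "\<forall>u v. E u v \<longrightarrow> snd (g (u, v)) = k2 v - k2 u"
  proof (atomize_elim, rule int_potential_exists)
    show "snd (g (v, u)) = - snd (g (u, v))" if "E u v" for u v using anti[OF that] by simp
    show "(\<Sum>b\<in>f. snd (g b)) = 0" if "f \<in> faces E \<sigma>" "f \<noteq> Out" for f
      using inner[OF that] by (simp flip: snd_sum)
  qed
  show ?thesis using k1 k2 by (intro exI[of _ "\<lambda>v. (k1 v, k2 v)"]) (simp add: prod_eq_iff)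
qed

end

section \<open>The dappled triangular grid\<close>

lemma Z3_cases: "(x::3) = 0 \<or> x = 1 \<or> x = 2"
proof (induct x)
  case (of_int z)
  then have "z = 0 \<or> z = 1 \<or> z = 2" by auto
  then show ?case by auto
qed

lemma Z2_cases: "(x::2) = 0 \<or> x = 1"
proof (induct x)
  case (of_int z)
  then have "z = 0 \<or> z = 1" by auto
  then show ?case by auto
qed

lemma Z2x2_nonzero_cases: "(c::2\<times>2) \<noteq> 0 \<Longrightarrow> c = (1,0) \<or> c = (0,1) \<or> c = (1,1)"
  using Z2_cases[of "fst c"] Z2_cases[of "snd c"] by (cases c) (auto simp: zero_prod_def)

lemma Z2_two: "(2::2) = 0"
  by simp

lemma Z3_nonzero_sum_zero_eq:
  assumes "h1 + h2 + h3 = (0::3)" "h1 \<noteq> 0" "h2 \<noteq> 0" "h3 \<noteq> 0"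
  shows "h2 = h1" "h3 = h1"
proof -
  have "- (h1 + h2) = h3" using assms(1) by (intro add.inverse_unique) simp
  then show "h2 = h1" "h3 = h1" using assms(2-4) Z3_cases[of h1] Z3_cases[of h2] by auto
qed

lemma T_hue_add: "T_hue (p + q) = T_hue p + T_hue q"
  by (simp add: T_hue_def)

lemma T_color_add: "T_color (p + q) = T_color p + T_color q"
  by (simp add: T_color_def)

lemma T_adj_iff: "T_adj p q \<longleftrightarrow> q - p \<in> {(1,0), (-1,0), (0,1), (0,-1), (1,1), (-1,-1)}"
  by (simp add: T_adj_def minus_prod_def)

(* The unit vectors (1,0), (0,1), (-1,-1) of T have hue 1 and the three nonzero colours;
   their negatives have hue 2.  So T_step h c is the unique unit vector of hue h and colour c. *)
definition T_dir :: "2 \<times> 2 \<Rightarrow> int \<times> int" where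
  "T_dir c = (if c = (1, 0) then (1, 0) else if c = (0, 1) then (0, 1) else (-1, -1))"

definition T_step :: "3 \<Rightarrow> 2 \<times> 2 \<Rightarrow> int \<times> int" where
  "T_step h c = (if h = 1 then T_dir c else - T_dir c)"

lemma
  assumes "h \<noteq> 0" "c \<noteq> 0"
  shows T_adj_T_step: "T_adj 0 (T_step h c)" and T_hue_T_step: "T_hue (T_step h c) = h"
    and T_color_T_step: "T_color (T_step h c) = c"
  using assms Z3_cases[of h] Z2_cases[of "fst c"] Z2_cases[of "snd c"]
  by (auto simp: T_step_def T_dir_def T_adj_def T_hue_def T_color_def prod_eq_iff)

lemma T_step_uminus: "h \<noteq> 0 \<Longrightarrow> T_step (- h) (- c) = - T_step h c"
  using Z3_cases[of h] Z2_cases[of "fst c"] Z2_cases[of "snd c"]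
  by (auto simp: T_step_def T_dir_def prod_eq_iff)

lemma T_dir_triangle:
  assumes "c1 + c2 + c3 = 0" "c1 \<noteq> 0" "c2 \<noteq> 0" "c3 \<noteq> 0"
  shows "T_dir c1 + T_dir c2 + T_dir c3 = 0"
proof -
  have "- (c1 + c2) = c3" using assms(1) by (intro add.inverse_unique) simp
  then show ?thesis
    using assms(4) Z2x2_nonzero_cases[OF assms(2)] Z2x2_nonzero_cases[OF assms(3)]
    by (elim disjE) (auto simp: T_dir_def zero_prod_def Z2_two)
qed

lemma T_step_triangle:
  assumes "h1 + h2 + h3 = 0" "c1 + c2 + c3 = 0" "h1 \<noteq> 0" "h2 \<noteq> 0" "h3 \<noteq> 0"
    "c1 \<noteq> 0" "c2 \<noteq> 0" "c3 \<noteq> 0"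
  shows "T_step h1 c1 + T_step h2 c2 + T_step h3 c3 = 0"
proof -
  have dir: "T_dir c1 + T_dir c2 + T_dir c3 = 0" using T_dir_triangle[OF assms(2,6-8)] .
  have "- T_dir c1 + - T_dir c2 + - T_dir c3 = - (T_dir c1 + T_dir c2 + T_dir c3)"
    by (simp add: algebra_simps)
  then show ?thesis using Z3_nonzero_sum_zero_eq[OF assms(1,3-5)] dir by (simp add: T_step_def)
qed

lemma T_point_exists: "\<exists>p. T_hue p = h \<and> T_color p = c"
proof -
  obtain c1 c2 where c: "c = (c1, c2)" by fastforce
  have "\<exists>a\<in>{0,1,2,3,4,5::int}. \<exists>b\<in>{0,1::int}.
      (of_int (a + b) :: 3) = h \<and> (of_int a :: 2) = c1 \<and> (of_int b :: 2) = c2"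
    using Z3_cases[of h] Z2_cases[of c1] Z2_cases[of c2] by (elim disjE) simp_all
  then show ?thesis unfolding T_hue_def T_color_def c by force
qed

lemma proper_diff_nonzero:
  fixes c :: "'v \<Rightarrow> 'a::ab_group_add"
  shows "proper_on V E c \<Longrightarrow> u \<in> V \<Longrightarrow> v \<in> V \<Longrightarrow> E u v \<Longrightarrow> c v - c u \<noteq> 0"
  unfolding proper_on_def by (metis right_minus_eq)

lemma viable_if_steps_have_potential:
  fixes \<psi> :: "'v \<Rightarrow> 3" and \<theta> :: "'v \<Rightarrow> 2 \<times> 2" and k :: "'v \<Rightarrow> int \<times> int"
  assumes "connected_graph V E"
    and nonzero: "\<And>u v. E u v \<Longrightarrow> \<psi> v - \<psi> u \<noteq> 0 \<and> \<theta> v - \<theta> u \<noteq> 0"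
    and k: "\<And>u v. E u v \<Longrightarrow> k v - k u = T_step (\<psi> v - \<psi> u) (\<theta> v - \<theta> u)"
  shows "viable V E \<psi> \<theta>"
proof -
  obtain r where r: "r \<in> V" using assms(1) by (auto simp: connected_graph_def)
  obtain p where p: "T_hue p = \<psi> r" "T_color p = \<theta> r" using T_point_exists by blast
  define f where "f v = p + (k v - k r)" for v
  have step: "f v = f u + T_step (\<psi> v - \<psi> u) (\<theta> v - \<theta> u)" if "E u v" for u v
    using k[OF that] by (simp add: f_def algebra_simps)
  have "T_adj (f u) (f v)" if "E u v" for u v
    using T_adj_T_step nonzero[OF that] step[OF that] by (simp add: T_adj_iff)
  moreover have "T_hue (f v) = \<psi> v \<and> T_color (f v) = \<theta> v" if "v \<in> V" for v
  proof (rule connected_graph_induct[OF assms(1) r that])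
    show "T_hue (f r) = \<psi> r \<and> T_color (f r) = \<theta> r" using p by (simp add: f_def)
    fix u w assume "E u w" "T_hue (f u) = \<psi> u \<and> T_color (f u) = \<theta> u"
    then show "T_hue (f w) = \<psi> w \<and> T_color (f w) = \<theta> w"
      using step nonzero T_hue_T_step T_color_T_step by (simp add: T_hue_add T_color_add)
  qed
  ultimately show ?thesis unfolding viable_def dappled_hom_T_def by blast
qed

theorem patch_viable:
  fixes V :: "'v set" and \<psi> :: "'v \<Rightarrow> 3" and \<theta> :: "'v \<Rightarrow> 2 \<times> 2"
  assumes "patch V E \<sigma> Out" "proper_on V E \<psi>" "proper_on V E \<theta>"
  shows "viable V E \<psi> \<theta>"
proof -
  interpret plane_map V E \<sigma> Out using assms(1) by unfold_locales (simp add: patch_def)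
  define d where "d a = T_step (\<psi> (snd a) - \<psi> (fst a)) (\<theta> (snd a) - \<theta> (fst a))" for a
  have nonzero: "\<psi> v - \<psi> u \<noteq> 0 \<and> \<theta> v - \<theta> u \<noteq> 0" if "E u v" for u v
    using proper_diff_nonzero[OF assms(2)] proper_diff_nonzero[OF assms(3)] edge_in_V[OF that] that
    by simp
  have anti: "d (v, u) = - d (u, v)" if "E u v" for u v
    using T_step_uminus[of "\<psi> v - \<psi> u" "\<theta> v - \<theta> u"] nonzero[OF that] by (simp add: d_def)
  have inner: "(\<Sum>b\<in>f. d b) = 0" if f: "f \<in> faces E \<sigma>" "f \<noteq> Out" for f
  proof -
    have "card f = 3" using assms(1) f by (simp add: patch_def)
    then obtain x y z where xyz: "E x y" "E y z" "E z x"
      "\<And>g :: 'v \<times> 'v \<Rightarrow> int \<times> int. (\<Sum>b\<in>f. g b) = g (x, y) + g (y, z) + g (z, x)"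
      using triangular_face[where 'a = "int \<times> int", OF f(1)] by blast
    show ?thesis unfolding xyz(4) d_def
      using nonzero[OF xyz(1)] nonzero[OF xyz(2)] nonzero[OF xyz(3)]
      by (intro T_step_triangle) simp_all
  qed
  obtain k where "\<And>u v. E u v \<Longrightarrow> d (u, v) = k v - k u"
    using int_pair_potential_exists[of d] anti inner by blast
  then show ?thesis
    using viable_if_steps_have_potential[OF connected nonzero] by (simp add: d_def)
qed

theorem corollary8:
  fixes V :: "'v set" and E :: "'v \<Rightarrow> 'v \<Rightarrow> bool" and \<sigma> :: "'v \<Rightarrow> 'v \<Rightarrow> 'v"
    and Out :: "('v \<times> 'v) set" and \<psi> :: "'v \<Rightarrow> 3" and \<phi> :: "'v \<Rightarrow> 2 \<times> 2"
  assumes "patch V E \<sigma> Out"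
    and "proper_on V E \<psi>"
    and "proper_on (bd_verts V E Out) (bd_adj Out) \<phi>"
    and "\<exists>\<theta> :: 'v \<Rightarrow> 2 \<times> 2. proper_on V E \<theta> \<and> (\<forall>v\<in>bd_verts V E Out. \<theta> v = \<phi> v)"
  shows "viable (bd_verts V E Out) (bd_adj Out) \<psi> \<phi>"
proof -
  interpret plane_map V E \<sigma> Out using assms(1) by unfold_locales (simp add: patch_def)
  obtain \<theta> where \<theta>: "proper_on V E \<theta>" "\<forall>v\<in>bd_verts V E Out. \<theta> v = \<phi> v" using assms(4) by blast
  obtain f where "dappled_hom_T V E \<psi> \<theta> f"
    using patch_viable[OF assms(1,2) \<theta>(1)] by (auto simp: viable_def)
  then have "dappled_hom_T (bd_verts V E Out) (bd_adj Out) \<psi> \<phi> f"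
    using boundary_subgraph \<theta>(2) unfolding dappled_hom_T_def by (metis subsetD)
  then show ?thesis by (auto simp: viable_def)
qed

end
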